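(* Assume $\ker(K)\cap\ker(D)=\{0\}$ and fix $\delta\ge0$ and data $y^\delta$. Let $\{\Psi_k\}_{k\in\mathbb{N}}$ be reconstructors and $\Psi$ a reconstructor such that $\sup_{y\in\mathcal{Y}^\delta}\|\Psi_k(y)-\Psi(y)\|_1\to0$ as $k\to\infty$, where $\mathcal{Y}^\delta=\{y\in\mathbb{R}^m:\inf_{x\in\mathcal{X}}\|Kx-y\|_2\le\delta\}$. For each $k$ let $x^*_{\Psi_k,\delta}$ be the unique minimizer over $\mathcal{X}$ of $\mathcal{J}_{\Psi_k,\delta}(x)=\|Kx-y^\delta\|_2^2+\lambda\|w(\Psi_k(y^\delta))\odot|Dx|\|_1$. Then the sequence $\{x^*_{\Psi_k,\delta}\}_{k\in\mathbb{N}}$ is bounded.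
   Context: Let $K\in\mathbb{R}^{m\times n}$ with $m\le n$, and let $D_h,D_v\in\mathbb{R}^{n\times n}$ be the discrete horizontal and vertical difference operators; $Dx=\begin{bmatrix}D_hx\\ D_vx\end{bmatrix}\in\mathbb{R}^{2n}$, and $|Dx|\in\mathbb{R}^n$, $(|Dx|)_i=\sqrt{(D_hx)_i^2+(D_vx)_i^2}$. $\mathcal{X}=\{x\in\mathbb{R}^n: x_i\ge 0\ \forall i\}$. Fix $\lambda>0$, $\eta>0$, $p\in(0,1)$, and for $\tilde x\in\mathbb{R}^n$ define $(w(\tilde{x}))_i=\big(\eta/\sqrt{\eta^2+(|D\tilde{x}|)_i^2}\big)^{1-p}$. A reconstructor is a Lipschitz continuous map $\Psi:\mathbb{R}^m\to\mathbb{R}^n$. The data is $y^\delta=Kx^{GT}+e$ with $x^{GT}\in\mathcal{X}$ and $\|e\|_2\le\delta$. $\odot$ is the entrywise product. *)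

theory Defs
  imports "HOL-Analysis.Analysis"
begin

definition Xpos :: "(real ^ 'n) set" where
  "Xpos = {x. \<forall>i. x $ i \<ge> 0}"

definition absD :: "real ^ 'n ^ 'n \<Rightarrow> real ^ 'n ^ 'n \<Rightarrow> real ^ 'n \<Rightarrow> real ^ 'n" where
  "absD Dh Dv x = (\<chi> i. sqrt (((Dh *v x) $ i)\<^sup>2 + ((Dv *v x) $ i)\<^sup>2))"

definition weight :: "real \<Rightarrow> real \<Rightarrow> real ^ 'n ^ 'n \<Rightarrow> real ^ 'n ^ 'n \<Rightarrow> real ^ 'n \<Rightarrow> real ^ 'n" where
  "weight \<eta> p Dh Dv xt =
     (\<chi> i. (\<eta> / sqrt (\<eta>\<^sup>2 + ((absD Dh Dv xt) $ i)\<^sup>2)) powr (1 - p))"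

definition norm1 :: "real ^ 'n \<Rightarrow> real" where
  "norm1 x = (\<Sum>i\<in>UNIV. \<bar>x $ i\<bar>)"

definition Jfun :: "real ^ 'n ^ 'm \<Rightarrow> real ^ 'n ^ 'n \<Rightarrow> real ^ 'n ^ 'n \<Rightarrow> real \<Rightarrow> real \<Rightarrow> real
                    \<Rightarrow> (real ^ 'm \<Rightarrow> real ^ 'n) \<Rightarrow> real ^ 'm \<Rightarrow> real ^ 'n \<Rightarrow> real" where
  "Jfun K Dh Dv lam \<eta> p Psi y x =
     (norm (K *v x - y))\<^sup>2
     + lam * norm1 (weight \<eta> p Dh Dv (Psi y) * absD Dh Dv x)"

definition Ydelta :: "real ^ 'n ^ 'm \<Rightarrow> real \<Rightarrow> (real ^ 'm) set" where
  "Ydelta K \<delta> = {y. (INF x\<in>Xpos. norm (K *v x - y)) \<le> \<delta>}"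

end

theory Submission
  imports Defs
begin

text \<open>Comparing a minimizer with the admissible point 0 bounds both the data fit and the weighted
  total variation by \<open>\<parallel>y\<delta>\<parallel>\<^sup>2\<close>. From some index on, \<open>\<Psi>\<^sub>k(y\<delta>)\<close> lies within 1 of \<open>\<Psi>(y\<delta>)\<close> in
  \<open>\<ell>\<^sub>1\<close>, so the weights \<open>w(\<Psi>\<^sub>k(y\<delta>))\<close> are bounded below by a common constant \<open>c > 0\<close>, and hence
  \<open>\<parallel>Kx\<^sub>k\<parallel>\<close> and \<open>\<parallel>|Dx\<^sub>k|\<parallel>\<^sub>1\<close> are bounded. Since \<open>ker K \<inter> ker D = {0}\<close>, the linear map
  \<open>x \<mapsto> (Kx, D\<^sub>hx, D\<^sub>vx)\<close> is bounded below, which bounds \<open>x\<^sub>k\<close>.\<close>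

lemma absD_nonneg: "0 \<le> absD Dh Dv x $ i"
  by (simp add: absD_def)

lemma absD_commute: "absD Dh Dv = absD Dv Dh"
  by (intro ext) (simp add: absD_def add.commute)

lemma abs_matrix_vector_le_absD: "\<bar>(Dh *v x) $ i\<bar> \<le> absD Dh Dv x $ i"
  by (simp add: absD_def real_le_rsqrt)

lemma absD_le_norms: "absD Dh Dv x $ i \<le> norm (Dh *v x) + norm (Dv *v x)"
proof -
  have "absD Dh Dv x $ i \<le> \<bar>(Dh *v x) $ i\<bar> + \<bar>(Dv *v x) $ i\<bar>"
    unfolding absD_def using sqrt_sum_squares_le_sum_abs by simp
  also have "\<dots> \<le> norm (Dh *v x) + norm (Dv *v x)"
    by (intro add_mono component_le_norm_cart)
  finally show ?thesis .
qed

lemma norm_matrix_vector_le_sum_absD: "norm (Dh *v x) \<le> (\<Sum>i\<in>UNIV. absD Dh Dv x $ i)"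
  by (rule order_trans[OF norm_le_l1_cart sum_mono]) (rule abs_matrix_vector_le_absD)

lemma norm_le_norm1: "norm x \<le> norm1 x"
  unfolding norm1_def by (rule norm_le_l1_cart)

lemma norm1_nonneg: "0 \<le> norm1 x"
  by (simp add: norm1_def sum_nonneg)

lemma norm1_triangle_diff: "norm1 a \<le> norm1 (a - b) + norm1 b"
  unfolding norm1_def sum.distrib[symmetric]
  by (rule sum_mono) (metis abs_triangle_ineq diff_add_cancel vector_minus_component)

lemma weight_ge_if_absD_le:
  assumes "0 < \<eta>" "p \<le> 1" "absD Dh Dv x $ i \<le> A"
  shows "(\<eta> / sqrt (\<eta>\<^sup>2 + A\<^sup>2)) powr (1 - p) \<le> weight \<eta> p Dh Dv x $ i"
proof -
  have "(absD Dh Dv x $ i)\<^sup>2 \<le> A\<^sup>2"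
    using assms(3) absD_nonneg by (intro power_mono)
  then have "\<eta> / sqrt (\<eta>\<^sup>2 + A\<^sup>2) \<le> \<eta> / sqrt (\<eta>\<^sup>2 + (absD Dh Dv x $ i)\<^sup>2)"
    using \<open>0 < \<eta>\<close> by (intro divide_left_mono) (auto intro!: mult_pos_pos add_pos_nonneg)
  then show ?thesis
    unfolding weight_def using assms(1,2) by (simp add: powr_mono2)
qed

lemma weight_uniformly_positive_on_ball:
  assumes "0 < \<eta>" "p \<le> 1"
  obtains c where "0 < c" "\<And>x i. norm x \<le> r \<Longrightarrow> c \<le> weight \<eta> p Dh Dv x $ i"
proof -
  obtain C1 where C1: "\<And>x. norm (Dh *v x) \<le> norm x * C1"
    using bounded_linear.bounded[OF matrix_vector_mul_bounded_linear] by blast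
  obtain C2 where C2: "\<And>x. norm (Dv *v x) \<le> norm x * C2"
    using bounded_linear.bounded[OF matrix_vector_mul_bounded_linear] by blast
  have "absD Dh Dv x $ i \<le> r * (\<bar>C1\<bar> + \<bar>C2\<bar>)" if "norm x \<le> r" for x i
  proof -
    have "norm x * C1 \<le> r * \<bar>C1\<bar>" "norm x * C2 \<le> r * \<bar>C2\<bar>"
      using that by (meson abs_ge_self abs_ge_zero mult_left_mono mult_right_mono norm_ge_zero
          order_trans)+
    then show ?thesis
      using absD_le_norms[of Dh Dv x i] C1[of x] C2[of x] by (simp add: algebra_simps)
  qed
  then show thesis
    using assms by (intro that[of "(\<eta> / sqrt (\<eta>\<^sup>2 + (r * (\<bar>C1\<bar> + \<bar>C2\<bar>))\<^sup>2)) powr (1 - p)"])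
      (auto intro: weight_ge_if_absD_le)
qed

lemma norm1_weighted_ge:
  assumes "\<And>i. c \<le> w $ i"
  shows "c * (\<Sum>i\<in>UNIV. absD Dh Dv x $ i) \<le> norm1 (w * absD Dh Dv x)"
proof -
  have "c * (\<Sum>i\<in>UNIV. absD Dh Dv x $ i) \<le> (\<Sum>i\<in>UNIV. w $ i * absD Dh Dv x $ i)"
    unfolding sum_distrib_left using assms absD_nonneg by (intro sum_mono mult_right_mono)
  also have "\<dots> \<le> norm1 (w * absD Dh Dv x)"
    unfolding norm1_def by (intro sum_mono) simp
  finally show ?thesis .
qed

lemma Jfun_zero: "Jfun K Dh Dv lam \<eta> p Psi y 0 = (norm y)\<^sup>2"
  by (simp add: Jfun_def absD_def norm1_def)

lemma zero_in_Xpos: "0 \<in> Xpos"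
  by (simp add: Xpos_def)

lemma Ydelta_contains_data:
  assumes "xGT \<in> Xpos" "norm e \<le> \<delta>"
  shows "K *v xGT + e \<in> Ydelta K \<delta>"
proof -
  have "(INF x\<in>Xpos. norm (K *v x - (K *v xGT + e))) \<le> norm (K *v xGT - (K *v xGT + e))"
    by (rule cINF_lower[OF _ assms(1)]) (rule bdd_belowI[of _ 0], auto)
  with assms(2) show ?thesis
    by (simp add: Ydelta_def)
qed

lemma minimizer_fidelity_and_penalty_bound:
  assumes "0 \<le> lam"
    and "\<forall>x'\<in>Xpos. Jfun K Dh Dv lam \<eta> p Psi y x \<le> Jfun K Dh Dv lam \<eta> p Psi y x'"
  shows "norm (K *v x - y) \<le> norm y"
    and "lam * norm1 (weight \<eta> p Dh Dv (Psi y) * absD Dh Dv x) \<le> (norm y)\<^sup>2"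
proof -
  have J: "(norm (K *v x - y))\<^sup>2 + lam * norm1 (weight \<eta> p Dh Dv (Psi y) * absD Dh Dv x)
      \<le> (norm y)\<^sup>2"
    using assms(2) zero_in_Xpos Jfun_zero by (metis Jfun_def)
  moreover have "0 \<le> lam * norm1 (weight \<eta> p Dh Dv (Psi y) * absD Dh Dv x)"
    using assms(1) norm1_nonneg by (rule mult_nonneg_nonneg)
  ultimately have "(norm (K *v x - y))\<^sup>2 \<le> (norm y)\<^sup>2"
    by linarith
  then show "norm (K *v x - y) \<le> norm y"
    by (rule power2_le_imp_le) simp
  show "lam * norm1 (weight \<eta> p Dh Dv (Psi y) * absD Dh Dv x) \<le> (norm y)\<^sup>2"
    using J by (smt (verit) zero_le_power2)
qed

lemma minimizer_norm_K_bound: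
  assumes "0 \<le> lam"
    and "\<forall>x'\<in>Xpos. Jfun K Dh Dv lam \<eta> p Psi y x \<le> Jfun K Dh Dv lam \<eta> p Psi y x'"
  shows "norm (K *v x) \<le> 2 * norm y"
  using minimizer_fidelity_and_penalty_bound(1)[OF assms] norm_triangle_ineq2[of "K *v x" y]
  by linarith

lemma minimizer_sum_absD_bound:
  assumes "0 < lam" "0 < c" "\<And>i. c \<le> weight \<eta> p Dh Dv (Psi y) $ i"
    and "\<forall>x'\<in>Xpos. Jfun K Dh Dv lam \<eta> p Psi y x \<le> Jfun K Dh Dv lam \<eta> p Psi y x'"
  shows "(\<Sum>i\<in>UNIV. absD Dh Dv x $ i) \<le> (norm y)\<^sup>2 / (lam * c)"
proof -
  have "lam * (c * (\<Sum>i\<in>UNIV. absD Dh Dv x $ i))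
      \<le> lam * norm1 (weight \<eta> p Dh Dv (Psi y) * absD Dh Dv x)"
    using assms(1,3) by (intro mult_left_mono norm1_weighted_ge) auto
  also have "\<dots> \<le> (norm y)\<^sup>2"
    using assms(1,4) by (intro minimizer_fidelity_and_penalty_bound(2)) auto
  finally show ?thesis
    using assms(1,2) by (simp add: field_simps)
qed

lemma coercive_if_kernels_trivial:
  fixes K :: "real ^ 'n ^ 'm" and Dh Dv :: "real ^ 'n ^ 'n"
  assumes "\<And>x. K *v x = 0 \<Longrightarrow> Dh *v x = 0 \<Longrightarrow> Dv *v x = 0 \<Longrightarrow> x = 0"
  obtains B where "0 < B"
    "\<And>x. B * norm x \<le> norm (K *v x) + 2 * (\<Sum>i\<in>UNIV. absD Dh Dv x $ i)"
proof -
  define f where "f x = (K *v x, Dh *v x, Dv *v x)" for x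
  have "linear f"
    unfolding f_def
    by (rule linearI) (auto simp: matrix_vector_right_distrib matrix_vector_mult_scaleR)
  moreover have "inj f"
    unfolding linear_injective_0[OF \<open>linear f\<close>] f_def using assms by (simp add: zero_prod_def)
  ultimately obtain B where B: "0 < B" "\<And>x. B * norm x \<le> norm (f x)"
    using linear_inj_bounded_below_pos by blast
  have "norm (f x) \<le> norm (K *v x) + 2 * (\<Sum>i\<in>UNIV. absD Dh Dv x $ i)" for x
  proof -
    have "norm (f x) \<le> norm (K *v x) + (norm (Dh *v x) + norm (Dv *v x))"
      unfolding f_def by (meson add_left_mono norm_Pair_le order_trans)
    then show ?thesis
      using norm_matrix_vector_le_sum_absD[of Dh x Dv] norm_matrix_vector_le_sum_absD[of Dv x Dh]
      by (simp add: absD_commute)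
  qed
  with B show thesis
    by (meson order_trans that)
qed

theorem lemma10:
  fixes K :: "real ^ 'n ^ 'm" and Dh Dv :: "real ^ 'n ^ 'n"
    and lam \<eta> p \<delta> :: real
    and xGT :: "real ^ 'n" and e y\<delta> :: "real ^ 'm"
    and Psis :: "nat \<Rightarrow> real ^ 'm \<Rightarrow> real ^ 'n" and Psi :: "real ^ 'm \<Rightarrow> real ^ 'n"
    and xs :: "nat \<Rightarrow> real ^ 'n"
  assumes mn: "CARD('m) \<le> CARD('n)"
    and lam: "lam > 0" and eta: "\<eta> > 0" and p: "0 < p" "p < 1"
    and ker: "\<And>x. K *v x = 0 \<Longrightarrow> Dh *v x = 0 \<Longrightarrow> Dv *v x = 0 \<Longrightarrow> x = 0"
    and delta: "\<delta> \<ge> 0"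
    and data: "y\<delta> = K *v xGT + e" "xGT \<in> Xpos" "norm e \<le> \<delta>"
    and lipk: "\<And>k. \<exists>L. L-lipschitz_on UNIV (Psis k)"
    and lip: "\<exists>L. L-lipschitz_on UNIV Psi"
    and unif: "\<forall>\<epsilon>>0. \<exists>N. \<forall>k\<ge>N. \<forall>y\<in>Ydelta K \<delta>. norm1 (Psis k y - Psi y) \<le> \<epsilon>"
    and minim: "\<And>k. xs k \<in> Xpos \<and>
                 (\<forall>x\<in>Xpos. Jfun K Dh Dv lam \<eta> p (Psis k) y\<delta> (xs k) \<le> Jfun K Dh Dv lam \<eta> p (Psis k) y\<delta> x) \<and>
                 (\<forall>z\<in>Xpos. (\<forall>x\<in>Xpos. Jfun K Dh Dv lam \<eta> p (Psis k) y\<delta> z \<le> Jfun K Dh Dv lam \<eta> p (Psis k) y\<delta> x)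
                           \<longrightarrow> z = xs k)"
  shows "bounded (range xs)"
proof -
  obtain N where N: "\<And>k. k \<ge> N \<Longrightarrow> norm1 (Psis k y\<delta> - Psi y\<delta>) \<le> 1"
    using unif Ydelta_contains_data[OF data(2,3)] data(1) by (metis zero_less_one)
  have Psis_bounded: "norm (Psis k y\<delta>) \<le> 1 + norm1 (Psi y\<delta>)" if "k \<ge> N" for k
    using norm_le_norm1 norm1_triangle_diff[of "Psis k y\<delta>" "Psi y\<delta>"] N[OF that]
    by (smt (verit))
  obtain c where c: "0 < c"
    "\<And>x i. norm x \<le> 1 + norm1 (Psi y\<delta>) \<Longrightarrow> c \<le> weight \<eta> p Dh Dv x $ i"
    using weight_uniformly_positive_on_ball[OF eta less_imp_le[OF p(2)]] by blast
  obtain B where B: "0 < B"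
    "\<And>x. B * norm x \<le> norm (K *v x) + 2 * (\<Sum>i\<in>UNIV. absD Dh Dv x $ i)"
    using coercive_if_kernels_trivial[OF ker] by blast
  have "B * norm (xs k) \<le> 2 * norm y\<delta> + 2 * ((norm y\<delta>)\<^sup>2 / (lam * c))" if "k \<ge> N" for k
  proof -
    have min: "\<forall>x\<in>Xpos. Jfun K Dh Dv lam \<eta> p (Psis k) y\<delta> (xs k) \<le> Jfun K Dh Dv lam \<eta> p (Psis k) y\<delta> x"
      using minim by blast
    have "norm (K *v xs k) \<le> 2 * norm y\<delta>"
      using lam min by (intro minimizer_norm_K_bound) auto
    moreover have "(\<Sum>i\<in>UNIV. absD Dh Dv (xs k) $ i) \<le> (norm y\<delta>)\<^sup>2 / (lam * c)"
      using lam c(1) c(2)[OF Psis_bounded[OF that]] min by (rule minimizer_sum_absD_bound)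
    ultimately show ?thesis
      using B(2)[of "xs k"] by linarith
  qed
  then have "\<forall>\<^sub>F k in sequentially.
      norm (xs k) \<le> (2 * norm y\<delta> + 2 * ((norm y\<delta>)\<^sup>2 / (lam * c))) / B"
    using B(1) by (auto simp: eventually_sequentially field_simps)
  then show ?thesis
    unfolding Bseq_eq_bounded[symmetric] by (rule BfunI)
qed

end
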